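(* Let $\mathcal F$ be a finite set of fragments, $\{u,v\}\in D$ with $u<v$, and let $E_u=\{ES_F:F\in\mathcal F_{\to u}\}$, $L_u=\{LS_F:F\in\mathcal F_{u\to}\}$, $E_v=\{ES_F:F\in\mathcal F_{\to v}\}$, $L_v=\{LS_F:F\in\mathcal F_{v\to}\}$. Consider, for $t\in\mathbb R$, the inequalities in variables $x\in\mathbb R^{\mathcal F}$ and $p\in\mathbb R$: (a$_t$) $\sum_{F\in\mathcal F_{\to u}:ES_F\ge t}x_F+\sum_{F\in\mathcal F_{v\to}:LS_F<t+\delta^{\min}_{uv}}x_F\le 2-p$; (b$_t$) $\sum_{F\in\mathcal F_{u\to}:LS_F\le t}x_F+\sum_{F\in\mathcal F_{\to v}:ES_F>t+\delta^{\max}_{uv}}x_F\le 2-p$; (c$_t$) $\sum_{F\in\mathcal F_{\to v}:ES_F\ge t}x_F+\sum_{F\in\mathcal F_{u\to}:LS_F<t+\delta^{\min}_{vu}}x_F\le 1+p$; (d$_t$) $\sum_{F\in\mathcal F_{v\to}:LS_F\le t}x_F+\sum_{F\in\mathcal F_{\to u}:ES_F>t+\delta^{\max}_{vu}}x_F\le 1+p$. Suppose $x\ge 0$, $0\le p\le 1$, and $\sum_{F\in\mathcal F_{\to w}}x_F\le1$, $\sum_{F\in\mathcal F_{w\to}}x_F\le 1$ for $w\in\{u,v\}$. Then: if (a$_t$) holds for all $t\in E_u$, it holds for all $t\in[\alpha_u,\beta_u]$; if (b$_t$) holds for all $t\in L_u$, it holds for all $t\in[\alpha_u,\beta_u]$;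 if (c$_t$) holds for all $t\in E_v$, it holds for all $t\in[\alpha_v,\beta_v]$; and if (d$_t$) holds for all $t\in L_v$, it holds for all $t\in[\alpha_v,\beta_v]$.
   Context: Instance data: tasks $V$, depot $0$, travel times $t_{uv}$, durations $d_v$, demands $q_v$, time windows $[\alpha_v,\beta_v]$, capacity $Q$; $D$ a set of unordered pairs of distinct tasks with parameters $\delta^{\min}_{uv},\delta^{\max}_{uv},\delta^{\min}_{vu},\delta^{\max}_{vu}\ge0$, $V_D$ the set of tasks in some pair of $D$. A fragment is a sequence $F=(v_1,\dots,v_\ell)$, $\ell\ge 2$, with $v_1,v_\ell\in V_D\cup\{0\}$, $v_2,\dots,v_{\ell-1}\in V\setminus V_D$, each task other than the depot occurring at most once, $\sum_{i=1}^{\ell-1}q_{v_i}\le Q$, and admitting a schedule. A schedule of $F$ is $(b_1,\dots,b_\ell)$ with $b_i\in[\alpha_{v_i},\beta_{v_i}]$, $b_i+d_{v_i}+t_{v_iv_{i+1}}\le b_{i+1}$ for $i<\ell$, and $\delta^{\min}_{v_1v_\ell}\le b_\ell-b_1\le\delta^{\max}_{v_1v_\ell}$ if $\{v_1,v_\ell\}\in D$. $LS_F=\max b_1$ and $ES_F=\min b_\ell$ over all schedules of $F$. For a set of fragments $\mathcal F$ and $w\in V_D$: $\mathcal F_{\to w}$ is the set of fragments in $\mathcal F$ ending at $w$ and $\mathcal F_{w\to}$ the set of those starting at $w$. *)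

theory Defs
  imports Complex_Main
begin

record vrp_instance =
  tasks :: "nat set"
  tt    :: "nat \<Rightarrow> nat \<Rightarrow> real"
  dur   :: "nat \<Rightarrow> real"
  dem   :: "nat \<Rightarrow> real"
  alpha :: "nat \<Rightarrow> real"
  beta  :: "nat \<Rightarrow> real"
  cap   :: real
  Dp    :: "nat set set"
  dmin  :: "nat \<Rightarrow> nat \<Rightarrow> real"
  dmax  :: "nat \<Rightarrow> nat \<Rightarrow> real"

definition depot :: nat where "depot = 0"

definition valid_instance :: "vrp_instance \<Rightarrow> bool" where
  "valid_instance I \<longleftrightarrow>
     finite (tasks I) \<and> depot \<notin> tasks I \<and>
     (\<forall>e\<in>Dp I. \<exists>a b. e = {a, b} \<and> a \<noteq> b \<and> a \<in> tasks I \<and> b \<in> tasks I) \<and>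
     (\<forall>a b. {a, b} \<in> Dp I \<longrightarrow> dmin I a b \<ge> 0 \<and> dmax I a b \<ge> 0)"

definition VD :: "vrp_instance \<Rightarrow> nat set" where
  "VD I = \<Union>(Dp I)"

text \<open>A schedule b of the sequence F (both lists of the same length, 0-indexed).\<close>
definition is_schedule :: "vrp_instance \<Rightarrow> nat list \<Rightarrow> real list \<Rightarrow> bool" where
  "is_schedule I F b \<longleftrightarrow>
     length b = length F \<and>
     (\<forall>i < length F. alpha I (F ! i) \<le> b ! i \<and> b ! i \<le> beta I (F ! i)) \<and>
     (\<forall>i. Suc i < length F \<longrightarrow>
          b ! i + dur I (F ! i) + tt I (F ! i) (F ! Suc i) \<le> b ! Suc i) \<and>
     ({hd F, last F} \<in> Dp I \<longrightarrow>
          dmin I (hd F) (last F) \<le> last b - hd b \<and> last b - hd b \<le> dmax I (hd F) (last F))"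

definition is_fragment :: "vrp_instance \<Rightarrow> nat list \<Rightarrow> bool" where
  "is_fragment I F \<longleftrightarrow>
     length F \<ge> 2 \<and>
     hd F \<in> VD I \<union> {depot} \<and> last F \<in> VD I \<union> {depot} \<and>
     (\<forall>i. 0 < i \<and> i < length F - 1 \<longrightarrow> F ! i \<in> tasks I - VD I) \<and>
     distinct (filter (\<lambda>w. w \<noteq> depot) F) \<and>
     (\<Sum>i < length F - 1. dem I (F ! i)) \<le> cap I \<and>
     (\<exists>b. is_schedule I F b)"

text \<open>LS_F = max b_1 and ES_F = min b_l over all schedules (attained, the set of
  schedules being compact and nonempty).\<close>
definition LS :: "vrp_instance \<Rightarrow> nat list \<Rightarrow> real" where
  "LS I F = Sup {hd b | b. is_schedule I F b}"

definition ES :: "vrp_instance \<Rightarrow> nat list \<Rightarrow> real" where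
  "ES I F = Inf {last b | b. is_schedule I F b}"

definition ending_at :: "nat list set \<Rightarrow> nat \<Rightarrow> nat list set" where
  "ending_at \<F> w = {F \<in> \<F>. last F = w}"

definition starting_at :: "nat list set \<Rightarrow> nat \<Rightarrow> nat list set" where
  "starting_at \<F> w = {F \<in> \<F>. hd F = w}"

definition ineq_a where
  "ineq_a I \<F> u v (x :: nat list \<Rightarrow> real) (p::real) t \<longleftrightarrow>
     (\<Sum>F\<in>{F\<in>ending_at \<F> u. ES I F \<ge> t}. x F)
     + (\<Sum>F\<in>{F\<in>starting_at \<F> v. LS I F < t + dmin I u v}. x F) \<le> 2 - p"

definition ineq_b where
  "ineq_b I \<F> u v (x :: nat list \<Rightarrow> real) (p::real) t \<longleftrightarrow>
     (\<Sum>F\<in>{F\<in>starting_at \<F> u. LS I F \<le> t}. x F)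
     + (\<Sum>F\<in>{F\<in>ending_at \<F> v. ES I F > t + dmax I u v}. x F) \<le> 2 - p"

definition ineq_c where
  "ineq_c I \<F> u v (x :: nat list \<Rightarrow> real) (p::real) t \<longleftrightarrow>
     (\<Sum>F\<in>{F\<in>ending_at \<F> v. ES I F \<ge> t}. x F)
     + (\<Sum>F\<in>{F\<in>starting_at \<F> u. LS I F < t + dmin I v u}. x F) \<le> 1 + p"

definition ineq_d where
  "ineq_d I \<F> u v (x :: nat list \<Rightarrow> real) (p::real) t \<longleftrightarrow>
     (\<Sum>F\<in>{F\<in>starting_at \<F> v. LS I F \<le> t}. x F)
     + (\<Sum>F\<in>{F\<in>ending_at \<F> u. ES I F > t + dmax I v u}. x F) \<le> 1 + p"

end

theory Submission
  imports Defs
begin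

text \<open>Each of the four left-hand sides is a step function of t that changes only at the
  breakpoints t \<in> E resp. t \<in> L. Moving t up (resp. down) to the nearest breakpoint keeps
  the first sum and can only enlarge the second one, since x \<ge> 0; if there is no such
  breakpoint, the first sum is empty and the second is bounded by one of the degree
  constraints, which is at most 1 \<le> 2 - p resp. 1 \<le> 1 + p. So the inequalities in fact hold
  for every real t, not only in the time windows, and no property of fragments is used.\<close>

lemma threshold_sum_bound_from_breakpoints:
  fixes A B :: "'a set" and e l x :: "'a \<Rightarrow> real"
  assumes "finite A" "finite B" "\<forall>F\<in>B. x F \<ge> 0" "sum x B \<le> K"
    and breakpoints: "\<forall>s\<in>e ` A. sum x {F\<in>A. s \<le> e F} + sum x {F\<in>B. l F < s + c} \<le> K"
  shows "sum x {F\<in>A. t \<le> e F} + sum x {F\<in>B. l F < t + c} \<le> K"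
proof (cases "{F\<in>A. t \<le> e F} = {}")
  case True
  have "sum x {F\<in>B. l F < t + c} \<le> sum x B"
    using assms(2,3) by (intro sum_mono2) auto
  with \<open>sum x B \<le> K\<close> show ?thesis unfolding True by simp
next
  case False
  define S where "S = {F\<in>A. t \<le> e F}"
  define s where "s = Min (e ` S)"
  have "finite S" using \<open>finite A\<close> by (simp add: S_def)
  with False have "s \<in> e ` S" unfolding s_def S_def by (intro Min_in) auto
  then have "s \<in> e ` A" and "t \<le> s" by (auto simp: S_def)
  have same_first: "{F\<in>A. s \<le> e F} = S"
    using \<open>t \<le> s\<close> \<open>finite S\<close> by (auto simp: S_def s_def intro: Min_le)
  have "sum x {F\<in>B. l F < t + c} \<le> sum x {F\<in>B. l F < s + c}"
    using assms(2,3) \<open>t \<le> s\<close> by (intro sum_mono2) auto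
  with breakpoints \<open>s \<in> e ` A\<close> same_first show ?thesis by (fastforce simp: S_def)
qed

lemma threshold_sum_bound_from_breakpoints_dual:
  fixes A B :: "'a set" and e l x :: "'a \<Rightarrow> real"
  assumes "finite A" "finite B" "\<forall>F\<in>B. x F \<ge> 0" "sum x B \<le> K"
    and breakpoints: "\<forall>s\<in>e ` A. sum x {F\<in>A. e F \<le> s} + sum x {F\<in>B. l F > s + c} \<le> K"
  shows "sum x {F\<in>A. e F \<le> t} + sum x {F\<in>B. l F > t + c} \<le> K"
proof -
  have negate: "- a < - b - c \<longleftrightarrow> b + c < a" for a b c :: real by linarith
  have "\<forall>s\<in>(\<lambda>F. - e F) ` A.
      sum x {F\<in>A. s \<le> - e F} + sum x {F\<in>B. - l F < s + - c} \<le> K"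
    using breakpoints by (auto simp: negate)
  from threshold_sum_bound_from_breakpoints[OF assms(1-4) this, of "- t"]
  show ?thesis by (simp add: negate)
qed

theorem theorem2:
  fixes I :: vrp_instance and \<F> :: "nat list set" and u v :: nat
    and x :: "nat list \<Rightarrow> real" and p :: real
  assumes "valid_instance I"
    and "finite \<F>" and "\<forall>F\<in>\<F>. is_fragment I F"
    and "{u, v} \<in> Dp I" and "u < v"
    and "\<forall>F\<in>\<F>. x F \<ge> 0" and "0 \<le> p" and "p \<le> 1"
    and "\<forall>w\<in>{u, v}. (\<Sum>F\<in>ending_at \<F> w. x F) \<le> 1 \<and> (\<Sum>F\<in>starting_at \<F> w. x F) \<le> 1"
  shows "((\<forall>t\<in>ES I ` ending_at \<F> u. ineq_a I \<F> u v x p t) \<longrightarrow>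
            (\<forall>t\<in>{alpha I u..beta I u}. ineq_a I \<F> u v x p t))
       \<and> ((\<forall>t\<in>LS I ` starting_at \<F> u. ineq_b I \<F> u v x p t) \<longrightarrow>
            (\<forall>t\<in>{alpha I u..beta I u}. ineq_b I \<F> u v x p t))
       \<and> ((\<forall>t\<in>ES I ` ending_at \<F> v. ineq_c I \<F> u v x p t) \<longrightarrow>
            (\<forall>t\<in>{alpha I v..beta I v}. ineq_c I \<F> u v x p t))
       \<and> ((\<forall>t\<in>LS I ` starting_at \<F> v. ineq_d I \<F> u v x p t) \<longrightarrow>
            (\<forall>t\<in>{alpha I v..beta I v}. ineq_d I \<F> u v x p t))"
proof -
  have finite: "finite (ending_at \<F> w)" "finite (starting_at \<F> w)" for w
    using \<open>finite \<F>\<close> by (simp_all add: ending_at_def starting_at_def)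
  have nonneg: "\<forall>F\<in>ending_at \<F> w. x F \<ge> 0" "\<forall>F\<in>starting_at \<F> w. x F \<ge> 0" for w
    using assms(6) by (simp_all add: ending_at_def starting_at_def)
  have degree_bounds: "sum x (starting_at \<F> v) \<le> 2 - p" "sum x (ending_at \<F> v) \<le> 2 - p"
    "sum x (starting_at \<F> u) \<le> 1 + p" "sum x (ending_at \<F> u) \<le> 1 + p"
    using assms(7-9) by auto
  note lower = threshold_sum_bound_from_breakpoints[OF finite(1,2) nonneg(2)]
    and upper = threshold_sum_bound_from_breakpoints_dual[OF finite(2,1) nonneg(1)]
  show ?thesis
    unfolding ineq_a_def ineq_b_def ineq_c_def ineq_d_def
    by (intro conjI impI ballI;
        rule lower[OF degree_bounds(1)] upper[OF degree_bounds(2)]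
          lower[OF degree_bounds(3)] upper[OF degree_bounds(4)], assumption)
qed

end
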